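(* Let $D_1,D_2$ be Beltrami--Vekua data (each in some $\mathcal{BV}(\Omega_i)$). If $\mathcal{M}(D_1)\neq\mathcal{M}(D_2)$, then $D_1$ and $D_2$ are not gauge-diffeomorphism equivalent, where $\mathcal{M}(D):=\int_\Omega\frac{|\mathcal{B}|^2}{1-|\mu|^2}\,dx\,dy\in[0,\infty]$ for $D=(\mu,\mathcal{A},\mathcal{B},\mathcal{F})\in\mathcal{BV}(\Omega)$.
   Context: A domain is an open connected subset of $\mathbb{C}$. $\mathcal{BV}(\Omega)$ is the set of quadruples $(\mu,\mathcal{A},\mathcal{B},\mathcal{F})$ of continuous complex functions on $\Omega$ with $|\mu|<1$ pointwise. Gauge action: for a $C^1$ nowhere-vanishing $\phi$ on $\Omega$, $\phi\cdot(\mu,\mathcal{A},\mathcal{B},\mathcal{F})=(\mu,\ \mathcal{A}-\phi_{\bar z}/\phi+\mu\phi_z/\phi,\ \mathcal{B}\phi/\bar\phi,\ \phi\mathcal{F})$. Diffeomorphism: $C^1$ bijection $\Phi:\Omega_1\to\Omega_2$ with $C^1$ inverse and $J=|\Phi_z|^2-|\Phi_{\bar z}|^2>0$; for $D\in\mathcal{BV}(\Omega_2)$, with $K=\Phi_z+(\mu\circ\Phi)\overline{\Phi_{\bar z}}$, $\Phi^*D=((\Phi_{\bar z}+(\mu\circ\Phi)\overline{\Phi_z})/K,\ J(\mathcal{A}\circ\Phi)/K,\ J(\mathcal{B}\circ\Phi)/K,\ J(\mathcal{F}\circ\Phi)/K)$. Gauge-diffeomorphism equivalence is the equivalence relation generated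 by the relations $D\sim\phi\cdot D$ (gauges) and $\Phi^*D\sim D$ (diffeomorphisms). *)

theory Defs
  imports "HOL-Analysis.Analysis"
begin

text \<open>A Beltrami--Vekua datum together with its domain:
  (Omega, mu, A, B, F). Only values on Omega matter.\<close>
type_synonym bvdatum =
  "complex set \<times> (complex \<Rightarrow> complex) \<times> (complex \<Rightarrow> complex) \<times> (complex \<Rightarrow> complex) \<times> (complex \<Rightarrow> complex)"

definition is_domain :: "complex set \<Rightarrow> bool" where
  "is_domain S \<longleftrightarrow> open S \<and> connected S \<and> S \<noteq> {}"

definition C1_on :: "complex set \<Rightarrow> (complex \<Rightarrow> complex) \<Rightarrow> bool" where
  "C1_on S f \<longleftrightarrow> (\<forall>z\<in>S. f differentiable (at z))
     \<and> continuous_on S (\<lambda>z. frechet_derivative f (at z) 1)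
     \<and> continuous_on S (\<lambda>z. frechet_derivative f (at z) \<i>)"

definition dz :: "(complex \<Rightarrow> complex) \<Rightarrow> complex \<Rightarrow> complex" where
  "dz f z = (frechet_derivative f (at z) 1 - \<i> * frechet_derivative f (at z) \<i>) / 2"

definition dzb :: "(complex \<Rightarrow> complex) \<Rightarrow> complex \<Rightarrow> complex" where
  "dzb f z = (frechet_derivative f (at z) 1 + \<i> * frechet_derivative f (at z) \<i>) / 2"

definition is_BV :: "bvdatum \<Rightarrow> bool" where
  "is_BV D \<longleftrightarrow> (case D of (\<Omega>, \<mu>, A, B, F) \<Rightarrow>
     is_domain \<Omega> \<and> continuous_on \<Omega> \<mu> \<and> continuous_on \<Omega> A \<and> continuous_on \<Omega> B
     \<and> continuous_on \<Omega> F \<and> (\<forall>z\<in>\<Omega>. cmod (\<mu> z) < 1))"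

definition gauge_act :: "(complex \<Rightarrow> complex) \<Rightarrow> bvdatum \<Rightarrow> bvdatum" where
  "gauge_act \<phi> D = (case D of (\<Omega>, \<mu>, A, B, F) \<Rightarrow>
     (\<Omega>, \<mu>,
      (\<lambda>z. A z - dzb \<phi> z / \<phi> z + \<mu> z * dz \<phi> z / \<phi> z),
      (\<lambda>z. B z * \<phi> z / cnj (\<phi> z)),
      (\<lambda>z. \<phi> z * F z)))"

definition jac :: "(complex \<Rightarrow> complex) \<Rightarrow> complex \<Rightarrow> real" where
  "jac \<Phi> z = (cmod (dz \<Phi> z))\<^sup>2 - (cmod (dzb \<Phi> z))\<^sup>2"

definition is_diffeo :: "(complex \<Rightarrow> complex) \<Rightarrow> complex set \<Rightarrow> complex set \<Rightarrow> bool" where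
  "is_diffeo \<Phi> \<Omega>1 \<Omega>2 \<longleftrightarrow> bij_betw \<Phi> \<Omega>1 \<Omega>2 \<and> C1_on \<Omega>1 \<Phi>
     \<and> C1_on \<Omega>2 (inv_into \<Omega>1 \<Phi>) \<and> (\<forall>z\<in>\<Omega>1. jac \<Phi> z > 0)"

definition pullback :: "(complex \<Rightarrow> complex) \<Rightarrow> complex set \<Rightarrow> bvdatum \<Rightarrow> bvdatum" where
  "pullback \<Phi> \<Omega>1 D = (case D of (\<Omega>2, \<mu>, A, B, F) \<Rightarrow>
     (let K = (\<lambda>z. dz \<Phi> z + \<mu> (\<Phi> z) * cnj (dzb \<Phi> z)) in
     (\<Omega>1,
      (\<lambda>z. (dzb \<Phi> z + \<mu> (\<Phi> z) * cnj (dz \<Phi> z)) / K z),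
      (\<lambda>z. of_real (jac \<Phi> z) * A (\<Phi> z) / K z),
      (\<lambda>z. of_real (jac \<Phi> z) * B (\<Phi> z) / K z),
      (\<lambda>z. of_real (jac \<Phi> z) * F (\<Phi> z) / K z))))"

text \<open>Gauge-diffeomorphism equivalence: the equivalence relation on Beltrami--Vekua data
  generated by gauges and diffeomorphism pullbacks (data being functions on their domain,
  tuples agreeing on the domain are identified).\<close>
inductive gd_equiv :: "bvdatum \<Rightarrow> bvdatum \<Rightarrow> bool" where
  ext: "is_BV (\<Omega>, \<mu>, A, B, F) \<Longrightarrow>
        (\<forall>z\<in>\<Omega>. \<mu> z = \<mu>' z \<and> A z = A' z \<and> B z = B' z \<and> F z = F' z) \<Longrightarrow>
        gd_equiv (\<Omega>, \<mu>, A, B, F) (\<Omega>, \<mu>', A', B', F')"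
| gauge: "is_BV D \<Longrightarrow> C1_on (fst D) \<phi> \<Longrightarrow> (\<forall>z\<in>fst D. \<phi> z \<noteq> 0) \<Longrightarrow>
        gd_equiv D (gauge_act \<phi> D)"
| diffeo: "is_BV D \<Longrightarrow> is_domain \<Omega>1 \<Longrightarrow> is_diffeo \<Phi> \<Omega>1 (fst D) \<Longrightarrow>
        gd_equiv (pullback \<Phi> \<Omega>1 D) D"
| sym: "gd_equiv D1 D2 \<Longrightarrow> gd_equiv D2 D1"
| trans: "gd_equiv D1 D2 \<Longrightarrow> gd_equiv D2 D3 \<Longrightarrow> gd_equiv D1 D3"

definition Mfun :: "bvdatum \<Rightarrow> ennreal" where
  "Mfun D = (case D of (\<Omega>, \<mu>, A, B, F) \<Rightarrow>
     (\<integral>\<^sup>+ z\<in>\<Omega>. ennreal ((cmod (B z))\<^sup>2 / (1 - (cmod (\<mu> z))\<^sup>2)) \<partial>lborel))"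

end

theory Submission
  imports Defs
begin

text \<open>\<open>Mfun\<close> is invariant under both generators of gauge-diffeomorphism equivalence.
  A gauge multiplies \<open>B\<close> by the unimodular factor \<open>\<phi> / cnj \<phi>\<close> and leaves \<open>\<mu>\<close> alone.
  For a diffeomorphism \<open>\<Phi>\<close>, write \<open>a = dz \<Phi>\<close>, \<open>b = dzb \<Phi>\<close> and \<open>m = \<mu> \<circ> \<Phi>\<close>; the identity
  \<open>|a + m cnj b|\<^sup>2 - |b + m cnj a|\<^sup>2 = (|a|\<^sup>2 - |b|\<^sup>2) (1 - |m|\<^sup>2)\<close> shows that the integrand
  \<open>|B|\<^sup>2 / (1 - |\<mu>|\<^sup>2)\<close> of the pullback is the Jacobian times the original integrand
  composed with \<open>\<Phi>\<close>, so the two integrals agree by the change of variables formula,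
  transported from \<open>real^2\<close> to \<open>complex\<close>.\<close>

definition vec_of_complex :: "complex \<Rightarrow> real^2" where
  "vec_of_complex z = vector [Re z, Im z]"

definition complex_of_vec :: "real^2 \<Rightarrow> complex" where
  "complex_of_vec v = Complex (v$1) (v$2)"

lemma vec_of_complex_nth [simp]: "vec_of_complex z $ 1 = Re z" "vec_of_complex z $ 2 = Im z"
  by (simp_all add: vec_of_complex_def)

lemma complex_of_vec_inverse [simp]: "complex_of_vec (vec_of_complex z) = z"
  by (simp add: complex_of_vec_def complex_eq_iff)

lemma vec_of_complex_inverse [simp]: "vec_of_complex (complex_of_vec v) = v"
  by (simp add: complex_of_vec_def vec_eq_iff forall_2)

lemma vec_of_complex_eq_iff [simp]: "vec_of_complex z = vec_of_complex w \<longleftrightarrow> z = w"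
  by (metis complex_of_vec_inverse)

lemma vimage_complex_of_vec: "complex_of_vec -` A = vec_of_complex ` A"
  by (auto simp: image_iff intro: exI[of _ "complex_of_vec _"]) (metis vec_of_complex_inverse)

lemma bounded_linear_complex_of_vec: "bounded_linear complex_of_vec"
  by (auto intro!: linearI simp: complex_of_vec_def complex_eq_iff linear_conv_bounded_linear[symmetric])

lemma bounded_linear_vec_of_complex: "bounded_linear vec_of_complex"
  by (auto intro!: linearI simp: vec_eq_iff forall_2 linear_conv_bounded_linear[symmetric])

lemma complex_of_vec_axis: "complex_of_vec (axis 1 1) = 1" "complex_of_vec (axis 2 1) = \<i>"
  by (simp_all add: complex_of_vec_def axis_def complex_eq_iff)

lemma borel_measurable_complex_of_vec [measurable]: "complex_of_vec \<in> borel_measurable borel"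
  using bounded_linear_complex_of_vec
  by (intro borel_measurable_continuous_onI linear_continuous_on)

lemma distr_lborel_complex_of_vec: "distr lborel borel complex_of_vec = (lborel :: complex measure)"
proof (rule lborel_eqI[symmetric])
  have Basis_vec2: "(Basis :: (real^2) set) = {axis 1 1, axis 2 1}"
    by (auto simp: Basis_vec_def UNIV_2)
  have axis_neq: "axis 1 (1::real) \<noteq> (axis 2 1 :: real^2)"
    by (simp add: axis_eq_axis)
  fix l u :: complex
  assume le: "\<And>b. b \<in> Basis \<Longrightarrow> l \<bullet> b \<le> u \<bullet> b"
  have "Re l \<le> Re u" "Im l \<le> Im u"
    using le[of 1] le[of \<i>] by (auto simp: Basis_complex_def)
  then have "emeasure lborel (box (vec_of_complex l) (vec_of_complex u))
      = ennreal (Re u - Re l) * ennreal (Im u - Im l)"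
    by (subst emeasure_lborel_box) (auto simp: Basis_vec2 axis_neq inner_axis ennreal_mult)
  moreover have "complex_of_vec -` box l u = box (vec_of_complex l) (vec_of_complex u)"
    by (auto simp: mem_box_cart mem_box Basis_complex_def forall_2 complex_of_vec_def)
  ultimately show "emeasure (distr lborel borel complex_of_vec) (box l u) = (\<Prod>b\<in>Basis. (u - l) \<bullet> b)"
    using \<open>Re l \<le> Re u\<close> \<open>Im l \<le> Im u\<close>
    by (simp add: emeasure_distr Basis_complex_def ennreal_mult inner_complex_def)
qed simp

lemma set_borel_measurable_complex_of_vec:
  assumes "set_borel_measurable borel A (h :: complex \<Rightarrow> real)"
  shows "set_borel_measurable borel (vec_of_complex ` A) (\<lambda>v. h (complex_of_vec v))"
proof -
  have "(\<lambda>v. indicator A (complex_of_vec v) *\<^sub>R h (complex_of_vec v)) \<in> borel_measurable borel"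
    using assms unfolding set_borel_measurable_def by measurable
  then show ?thesis
    by (simp add: set_borel_measurable_def flip: vimage_complex_of_vec indicator_vimage[unfolded comp_def])
qed

lemma set_nn_integral_complex_of_vec:
  assumes "set_borel_measurable borel A (h :: complex \<Rightarrow> real)"
  shows "(\<integral>\<^sup>+z\<in>A. h z \<partial>lborel) = (\<integral>\<^sup>+v\<in>vec_of_complex ` A. h (complex_of_vec v) \<partial>lborel)"
proof -
  have "(\<lambda>z. ennreal (indicator A z * h z)) \<in> borel_measurable borel"
    using assms unfolding set_borel_measurable_def by simp
  moreover have "(\<lambda>z. ennreal (indicator A z * h z)) = (\<lambda>z. ennreal (h z) * indicator A z)"
    by (auto simp: indicator_def)
  ultimately have "(\<lambda>z. ennreal (h z) * indicator A z) \<in> borel_measurable borel"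
    by simp
  then have "(\<integral>\<^sup>+z\<in>A. h z \<partial>distr lborel borel complex_of_vec)
      = (\<integral>\<^sup>+v\<in>complex_of_vec -` A. h (complex_of_vec v) \<partial>lborel)"
    by (subst nn_integral_distr) (auto simp: indicator_vimage[unfolded comp_def, symmetric])
  then show ?thesis
    by (simp add: distr_lborel_complex_of_vec vimage_complex_of_vec)
qed

lemma set_nn_integral_eq_integral_if_absolutely_integrable:
  fixes f :: "'a::euclidean_space \<Rightarrow> real"
  assumes "f absolutely_integrable_on S" and "\<And>x. x \<in> S \<Longrightarrow> 0 \<le> f x"
  shows "(\<integral>\<^sup>+x\<in>S. f x \<partial>lborel) = ennreal (integral S f)"
  using assms by (intro nn_integral_has_integral_lebesgue' integrable_integral
      set_lebesgue_integral_eq_integral(1))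

lemma absolutely_integrable_if_set_nn_integral_finite:
  fixes f :: "'a::euclidean_space \<Rightarrow> real"
  assumes "set_borel_measurable borel S f" and "\<And>x. x \<in> S \<Longrightarrow> 0 \<le> f x"
    and "(\<integral>\<^sup>+x\<in>S. f x \<partial>lborel) < \<infinity>"
  shows "f absolutely_integrable_on S"
proof -
  have "(\<integral>\<^sup>+x\<in>S. f x \<partial>lborel) = (\<integral>\<^sup>+x. ennreal (indicator S x * f x) \<partial>lborel)"
    by (intro nn_integral_cong) (auto simp: indicator_def)
  then have "(\<lambda>x. indicator S x * f x) integrable_on UNIV"
    using assms by (intro nn_integral_integrable_on)
      (auto simp: set_borel_measurable_def indicator_def)
  moreover have "(\<lambda>x. indicator S x * f x) = (\<lambda>x. if x \<in> S then f x else 0)"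
    by (auto simp: indicator_def)
  ultimately have "f integrable_on S"
    by (simp add: integrable_restrict_UNIV)
  then show ?thesis
    using assms(2) by (rule nonnegative_absolutely_integrable_1)
qed

lemma set_nn_integral_eq_if_absolute_integrals_eq:
  fixes f :: "'a::euclidean_space \<Rightarrow> real" and g :: "'b::euclidean_space \<Rightarrow> real"
  assumes f: "set_borel_measurable borel S f" "\<And>x. x \<in> S \<Longrightarrow> 0 \<le> f x"
    and g: "set_borel_measurable borel T g" "\<And>y. y \<in> T \<Longrightarrow> 0 \<le> g y"
    and same: "\<And>b. f absolutely_integrable_on S \<and> integral S f = b
                   \<longleftrightarrow> g absolutely_integrable_on T \<and> integral T g = b"
  shows "(\<integral>\<^sup>+x\<in>S. f x \<partial>lborel) = (\<integral>\<^sup>+y\<in>T. g y \<partial>lborel)"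
proof (cases "f absolutely_integrable_on S")
  case True
  then have "g absolutely_integrable_on T" "integral T g = integral S f"
    using same[of "integral S f"] by simp_all
  with True show ?thesis
    using f(2) g(2) by (simp add: set_nn_integral_eq_integral_if_absolutely_integrable)
next
  case False
  moreover have "\<not> g absolutely_integrable_on T"
    using False same[of "integral T g"] by blast
  ultimately have "\<not> (\<integral>\<^sup>+x\<in>S. f x \<partial>lborel) < \<infinity>" "\<not> (\<integral>\<^sup>+y\<in>T. g y \<partial>lborel) < \<infinity>"
    using absolutely_integrable_if_set_nn_integral_finite f g by blast+
  then show ?thesis
    by (simp add: top.not_eq_extremum[symmetric])
qed

lemma set_nn_integral_change_of_variables:
  fixes f :: "real^'m::{finite,wellorder} \<Rightarrow> real" and g :: "real^'m::_ \<Rightarrow> real^'m::_"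
  assumes S: "S \<in> sets lebesgue"
    and der_g: "\<And>x. x \<in> S \<Longrightarrow> (g has_derivative g' x) (at x within S)"
    and inj: "inj_on g S"
    and nonneg: "\<And>y. y \<in> g ` S \<Longrightarrow> 0 \<le> f y"
    and meas_f: "set_borel_measurable borel (g ` S) f"
    and meas_fg: "set_borel_measurable borel S (\<lambda>x. \<bar>det (matrix (g' x))\<bar> * f (g x))"
  shows "(\<integral>\<^sup>+y\<in>g ` S. f y \<partial>lborel)
       = (\<integral>\<^sup>+x\<in>S. \<bar>det (matrix (g' x))\<bar> * f (g x) \<partial>lborel)"
proof (rule set_nn_integral_eq_if_absolute_integrals_eq[OF meas_f _ meas_fg])
  fix b
  have "(\<lambda>x. \<bar>det (matrix (g' x))\<bar> *\<^sub>R vec (f (g x)) :: real^1) absolutely_integrable_on S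
        \<and> integral S (\<lambda>x. \<bar>det (matrix (g' x))\<bar> *\<^sub>R vec (f (g x))) = (vec b :: real^1)
      \<longleftrightarrow> (\<lambda>y. vec (f y) :: real^1) absolutely_integrable_on g ` S
        \<and> integral (g ` S) (\<lambda>y. vec (f y)) = (vec b :: real^1)"
    by (rule has_absolute_integral_change_of_variables[OF S der_g inj])
  then show "f absolutely_integrable_on g ` S \<and> integral (g ` S) f = b
      \<longleftrightarrow> (\<lambda>x. \<bar>det (matrix (g' x))\<bar> * f (g x)) absolutely_integrable_on S
        \<and> integral S (\<lambda>x. \<bar>det (matrix (g' x))\<bar> * f (g x)) = b"
    by (simp add: absolutely_integrable_on_1_iff integral_on_1_eq)
qed (use nonneg in auto)

definition real_det :: "(complex \<Rightarrow> complex) \<Rightarrow> real" where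
  "real_det L = Re (L 1) * Im (L \<i>) - Im (L 1) * Re (L \<i>)"

lemma det_matrix_vec_of_complex:
  "det (matrix (\<lambda>v. vec_of_complex (L (complex_of_vec v)))) = real_det L"
  unfolding det_2 matrix_def real_det_def by (simp add: complex_of_vec_axis)

lemma set_nn_integral_change_of_variables_complex:
  fixes \<Phi> :: "complex \<Rightarrow> complex" and f :: "complex \<Rightarrow> real"
  assumes \<Omega>: "open \<Omega>"
    and der: "\<And>z. z \<in> \<Omega> \<Longrightarrow> (\<Phi> has_derivative L z) (at z)"
    and inj: "inj_on \<Phi> \<Omega>"
    and nonneg: "\<And>w. w \<in> \<Phi> ` \<Omega> \<Longrightarrow> 0 \<le> f w"
    and meas_f: "set_borel_measurable borel (\<Phi> ` \<Omega>) f"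
    and meas_f\<Phi>: "set_borel_measurable borel \<Omega> (\<lambda>z. \<bar>real_det (L z)\<bar> * f (\<Phi> z))"
  shows "(\<integral>\<^sup>+w\<in>\<Phi> ` \<Omega>. f w \<partial>lborel) = (\<integral>\<^sup>+z\<in>\<Omega>. \<bar>real_det (L z)\<bar> * f (\<Phi> z) \<partial>lborel)"
proof -
  define g where "g v = vec_of_complex (\<Phi> (complex_of_vec v))" for v
  define g' where "g' v h = vec_of_complex (L (complex_of_vec v) (complex_of_vec h))" for v h
  have image: "g ` vec_of_complex ` \<Omega> = vec_of_complex ` \<Phi> ` \<Omega>"
    by (simp add: g_def image_image)
  have "vec_of_complex ` \<Omega> \<in> sets borel"
    using measurable_sets[OF borel_measurable_complex_of_vec, of \<Omega>] \<Omega>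
    by (simp flip: vimage_complex_of_vec)
  then have S: "vec_of_complex ` \<Omega> \<in> sets lebesgue"
    by simp
  have der_g: "(g has_derivative g' v) (at v within vec_of_complex ` \<Omega>)"
    if "v \<in> vec_of_complex ` \<Omega>" for v
  proof -
    have "(\<Phi> has_derivative L (complex_of_vec v)) (at (complex_of_vec v))"
      using der that by auto
    with bounded_linear_imp_has_derivative[OF bounded_linear_complex_of_vec]
    have "((\<lambda>x. \<Phi> (complex_of_vec x)) has_derivative (\<lambda>h. L (complex_of_vec v) (complex_of_vec h))) (at v)"
      by (rule has_derivative_compose)
    from has_derivative_compose[OF this bounded_linear_imp_has_derivative[OF bounded_linear_vec_of_complex]]
    show ?thesis
      unfolding g_def g'_def by (rule has_derivative_at_withinI)
  qed
  have inj_g: "inj_on g (vec_of_complex ` \<Omega>)"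
    using inj by (auto simp: inj_on_def g_def)
  have det: "det (matrix (g' v)) = real_det (L (complex_of_vec v))" for v
    unfolding g'_def by (rule det_matrix_vec_of_complex)
  have "(\<integral>\<^sup>+w\<in>\<Phi> ` \<Omega>. f w \<partial>lborel) = (\<integral>\<^sup>+v\<in>g ` vec_of_complex ` \<Omega>. f (complex_of_vec v) \<partial>lborel)"
    unfolding image by (rule set_nn_integral_complex_of_vec[OF meas_f])
  also have "\<dots> = (\<integral>\<^sup>+v\<in>vec_of_complex ` \<Omega>. \<bar>det (matrix (g' v))\<bar> * f (complex_of_vec (g v)) \<partial>lborel)"
  proof (rule set_nn_integral_change_of_variables[OF S der_g inj_g])
    show "set_borel_measurable borel (g ` vec_of_complex ` \<Omega>) (\<lambda>v. f (complex_of_vec v))"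
      unfolding image by (rule set_borel_measurable_complex_of_vec[OF meas_f])
    show "set_borel_measurable borel (vec_of_complex ` \<Omega>)
        (\<lambda>v. \<bar>det (matrix (g' v))\<bar> * f (complex_of_vec (g v)))"
      unfolding det g_def complex_of_vec_inverse
      by (rule set_borel_measurable_complex_of_vec[OF meas_f\<Phi>])
    show "0 \<le> f (complex_of_vec y)" if "y \<in> g ` vec_of_complex ` \<Omega>" for y
      using nonneg that unfolding image by auto
  qed
  also have "\<dots> = (\<integral>\<^sup>+z\<in>\<Omega>. \<bar>real_det (L z)\<bar> * f (\<Phi> z) \<partial>lborel)"
    unfolding det g_def complex_of_vec_inverse
    by (rule set_nn_integral_complex_of_vec[OF meas_f\<Phi>, symmetric])
  finally show ?thesis .
qed

lemma jac_eq_real_det: "jac \<Phi> z = real_det (frechet_derivative \<Phi> (at z))"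
  unfolding jac_def real_det_def dz_def dzb_def cmod_power2
  by (simp add: power2_eq_square field_simps)

lemma cmod_power2_twisted_diff:
  fixes a b m :: complex
  shows "(cmod (a + m * cnj b))\<^sup>2 - (cmod (b + m * cnj a))\<^sup>2
       = ((cmod a)\<^sup>2 - (cmod b)\<^sup>2) * (1 - (cmod m)\<^sup>2)"
  unfolding cmod_power2 by (simp add: power2_eq_square algebra_simps)

lemma one_minus_cmod_power2_pos: "cmod m < 1 \<Longrightarrow> 0 < 1 - (cmod m)\<^sup>2"
  by (simp add: power_less_one_iff)

text \<open>With \<open>a = dz \<Phi> z\<close>, \<open>b = dzb \<Phi> z\<close>, \<open>m = \<mu> (\<Phi> z)\<close> and \<open>\<beta> = B (\<Phi> z)\<close>, the
  left-hand side is the integrand of \<open>Mfun\<close> for the pullback datum and \<open>J = jac \<Phi> z\<close>.\<close>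
lemma pullback_density_eq:
  fixes a b m \<beta> :: complex and J :: real
  assumes m: "cmod m < 1" and J: "J = (cmod a)\<^sup>2 - (cmod b)\<^sup>2" "J > 0"
  shows "(cmod (of_real J * \<beta> / (a + m * cnj b)))\<^sup>2
           / (1 - (cmod ((b + m * cnj a) / (a + m * cnj b)))\<^sup>2)
       = J * ((cmod \<beta>)\<^sup>2 / (1 - (cmod m)\<^sup>2))"
proof -
  define K where "K = a + m * cnj b"
  have "cmod b < cmod a"
    using J by (smt (verit) norm_ge_zero power2_le_imp_le)
  moreover have "cmod (m * cnj b) \<le> cmod b"
    using m by (simp add: norm_mult mult_left_le_one_le)
  ultimately have "K \<noteq> 0"
    unfolding K_def by (metis add_eq_0_iff norm_minus_cancel order_le_less_trans order_less_irrefl)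
  have "1 - (cmod ((b + m * cnj a) / K))\<^sup>2 = ((cmod K)\<^sup>2 - (cmod (b + m * cnj a))\<^sup>2) / (cmod K)\<^sup>2"
    using \<open>K \<noteq> 0\<close> by (simp add: norm_divide power_divide field_simps)
  also have "\<dots> = J * (1 - (cmod m)\<^sup>2) / (cmod K)\<^sup>2"
    unfolding K_def J(1) cmod_power2_twisted_diff ..
  finally have den: "1 - (cmod ((b + m * cnj a) / K))\<^sup>2 = J * (1 - (cmod m)\<^sup>2) / (cmod K)\<^sup>2" .
  have num: "(cmod (of_real J * \<beta> / K))\<^sup>2 = J\<^sup>2 * (cmod \<beta>)\<^sup>2 / (cmod K)\<^sup>2"
    by (simp add: norm_divide norm_mult power_divide power_mult_distrib)
  show ?thesis
    unfolding K_def[symmetric] den num using \<open>K \<noteq> 0\<close> one_minus_cmod_power2_pos[OF m] J(2)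
    by (simp add: field_simps power2_eq_square)
qed

lemma set_nn_integral_diffeo_change_of_variables:
  assumes "open \<Omega>1" "open \<Omega>2" and diffeo: "is_diffeo \<Phi> \<Omega>1 \<Omega>2"
    and "continuous_on \<Omega>2 h" and h_nonneg: "\<And>w. w \<in> \<Omega>2 \<Longrightarrow> 0 \<le> h w"
  shows "(\<integral>\<^sup>+w\<in>\<Omega>2. h w \<partial>lborel) = (\<integral>\<^sup>+z\<in>\<Omega>1. jac \<Phi> z * h (\<Phi> z) \<partial>lborel)"
proof -
  have "inj_on \<Phi> \<Omega>1" and image: "\<Phi> ` \<Omega>1 = \<Omega>2" and "C1_on \<Omega>1 \<Phi>"
    and jac_pos: "\<And>z. z \<in> \<Omega>1 \<Longrightarrow> jac \<Phi> z > 0"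
    using diffeo by (auto simp: is_diffeo_def bij_betw_def)
  define L where "L z = frechet_derivative \<Phi> (at z)" for z
  have der: "(\<Phi> has_derivative L z) (at z)" if "z \<in> \<Omega>1" for z
    using \<open>C1_on \<Omega>1 \<Phi>\<close> that unfolding C1_on_def L_def by (auto simp: frechet_derivative_works)
  have "continuous_on \<Omega>1 \<Phi>"
    using der by (meson continuous_at_imp_continuous_on has_derivative_continuous)
  have "continuous_on \<Omega>1 (\<lambda>z. real_det (L z))"
    using \<open>C1_on \<Omega>1 \<Phi>\<close> unfolding C1_on_def L_def real_det_def by (intro continuous_intros) auto
  moreover have "continuous_on \<Omega>1 (\<lambda>z. h (\<Phi> z))"
    using \<open>continuous_on \<Omega>2 h\<close> \<open>continuous_on \<Omega>1 \<Phi>\<close>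
    by (rule continuous_on_compose2) (use image in auto)
  ultimately have "continuous_on \<Omega>1 (\<lambda>z. \<bar>real_det (L z)\<bar> * h (\<Phi> z))"
    by (intro continuous_intros)
  then have "set_borel_measurable borel \<Omega>1 (\<lambda>z. \<bar>real_det (L z)\<bar> * h (\<Phi> z))"
    unfolding set_borel_measurable_def using \<open>open \<Omega>1\<close>
    by (intro borel_measurable_continuous_on_indicator) auto
  moreover have "set_borel_measurable borel (\<Phi> ` \<Omega>1) h"
    unfolding set_borel_measurable_def image using \<open>open \<Omega>2\<close> \<open>continuous_on \<Omega>2 h\<close>
    by (intro borel_measurable_continuous_on_indicator) auto
  ultimately have "(\<integral>\<^sup>+w\<in>\<Phi> ` \<Omega>1. h w \<partial>lborel) = (\<integral>\<^sup>+z\<in>\<Omega>1. \<bar>real_det (L z)\<bar> * h (\<Phi> z) \<partial>lborel)"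
    using h_nonneg image
    by (intro set_nn_integral_change_of_variables_complex[OF \<open>open \<Omega>1\<close> der \<open>inj_on \<Phi> \<Omega>1\<close>]) auto
  also have "\<dots> = (\<integral>\<^sup>+z\<in>\<Omega>1. jac \<Phi> z * h (\<Phi> z) \<partial>lborel)"
    using jac_pos by (intro nn_integral_cong) (auto simp: jac_eq_real_det L_def abs_of_pos split: split_indicator)
  finally show ?thesis
    unfolding image .
qed

lemma Mfun_pullback:
  assumes "is_BV D" and "is_domain \<Omega>1" and "is_diffeo \<Phi> \<Omega>1 (fst D)"
  shows "Mfun (pullback \<Phi> \<Omega>1 D) = Mfun D"
proof -
  obtain \<Omega>2 \<mu> A B F where D: "D = (\<Omega>2, \<mu>, A, B, F)"
    by (cases D)
  have "open \<Omega>1" "open \<Omega>2" and \<mu>: "\<And>w. w \<in> \<Omega>2 \<Longrightarrow> cmod (\<mu> w) < 1"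
    and "continuous_on \<Omega>2 \<mu>" "continuous_on \<Omega>2 B"
    using assms(1,2) by (auto simp: D is_BV_def is_domain_def)
  have diffeo: "is_diffeo \<Phi> \<Omega>1 \<Omega>2"
    using assms(3) by (simp add: D)
  then have image: "\<Phi> ` \<Omega>1 = \<Omega>2" and jac_pos: "\<And>z. z \<in> \<Omega>1 \<Longrightarrow> jac \<Phi> z > 0"
    by (auto simp: is_diffeo_def bij_betw_def)
  define h where "h w = (cmod (B w))\<^sup>2 / (1 - (cmod (\<mu> w))\<^sup>2)" for w
  have den_pos: "0 < 1 - (cmod (\<mu> w))\<^sup>2" if "w \<in> \<Omega>2" for w
    using \<mu>[OF that] by (rule one_minus_cmod_power2_pos)
  have h_nonneg: "0 \<le> h w" if "w \<in> \<Omega>2" for w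
    unfolding h_def using den_pos[OF that] by simp
  have "\<forall>w\<in>\<Omega>2. 1 - (cmod (\<mu> w))\<^sup>2 \<noteq> 0"
    using den_pos by force
  then have "continuous_on \<Omega>2 h"
    unfolding h_def using \<open>continuous_on \<Omega>2 \<mu>\<close> \<open>continuous_on \<Omega>2 B\<close>
    by (intro continuous_intros)
  have density: "(cmod (of_real (jac \<Phi> z) * B (\<Phi> z) / (dz \<Phi> z + \<mu> (\<Phi> z) * cnj (dzb \<Phi> z))))\<^sup>2
        / (1 - (cmod ((dzb \<Phi> z + \<mu> (\<Phi> z) * cnj (dz \<Phi> z))
                    / (dz \<Phi> z + \<mu> (\<Phi> z) * cnj (dzb \<Phi> z))))\<^sup>2)
      = jac \<Phi> z * h (\<Phi> z)" if "z \<in> \<Omega>1" for z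
    unfolding h_def using image that by (intro pullback_density_eq[OF \<mu> jac_def jac_pos]) auto
  have "Mfun (pullback \<Phi> \<Omega>1 D) = (\<integral>\<^sup>+z\<in>\<Omega>1. jac \<Phi> z * h (\<Phi> z) \<partial>lborel)"
    unfolding Mfun_def pullback_def D Let_def
    by (simp, intro nn_integral_cong) (auto simp: density split: split_indicator)
  also have "\<dots> = (\<integral>\<^sup>+w\<in>\<Omega>2. h w \<partial>lborel)"
    by (rule set_nn_integral_diffeo_change_of_variables[symmetric,
        OF \<open>open \<Omega>1\<close> \<open>open \<Omega>2\<close> diffeo \<open>continuous_on \<Omega>2 h\<close> h_nonneg])
  also have "\<dots> = Mfun D"
    by (simp add: Mfun_def D h_def)
  finally show ?thesis .
qed

lemma Mfun_gauge_act:
  assumes "\<forall>z\<in>fst D. \<phi> z \<noteq> 0"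
  shows "Mfun (gauge_act \<phi> D) = Mfun D"
proof -
  obtain \<Omega> \<mu> A B F where D: "D = (\<Omega>, \<mu>, A, B, F)"
    by (cases D)
  have "cmod (B z * \<phi> z / cnj (\<phi> z)) = cmod (B z)" if "z \<in> \<Omega>" for z
    using assms that by (simp add: D norm_mult norm_divide)
  then show ?thesis
    unfolding Mfun_def gauge_act_def D
    by (auto intro!: nn_integral_cong split: split_indicator)
qed

lemma Mfun_eq_if_gd_equiv: "gd_equiv D1 D2 \<Longrightarrow> Mfun D1 = Mfun D2"
proof (induction rule: gd_equiv.induct)
  case (ext \<Omega> \<mu> A B F \<mu>' A' B' F')
  then show ?case
    unfolding Mfun_def by (auto intro!: nn_integral_cong split: split_indicator)
next
  case (gauge D \<phi>)
  then show ?case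
    by (simp add: Mfun_gauge_act)
next
  case (diffeo D \<Omega>1 \<Phi>)
  then show ?case
    by (rule Mfun_pullback)
qed simp_all

theorem corollary9p5:
  assumes "is_BV D1" and "is_BV D2" and "Mfun D1 \<noteq> Mfun D2"
  shows "\<not> gd_equiv D1 D2"
  using Mfun_eq_if_gd_equiv assms(3) by blast

end
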